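(* Let $\beta$, $R$, $\varphi$, $\beta'=\varphi(\beta)$ be as in the context (single-conjugate case), let $z_1,\dots,z_m\in R$, let $g_k(x)=\beta x+z_k$ and $g'_k(x)=\beta' x+\varphi(z_k)$ for $k=1,\dots,m$, and let $A$ be the attractor of the contracting IFS $\{g'_1,\dots,g'_m\}$. Then: (i) for each cycle $\{x_1,\dots,x_n\}\subset R$ of the IFS $\{g_1,\dots,g_m\}$, the points $\varphi(x_1),\dots,\varphi(x_n)$ form a cycle of the IFS $\{g'_1,\dots,g'_m\}$, and all of them belong to $A$; (ii) for each closed discrete set $\Lambda\subset R$ with $\Lambda=\bigcup_{k=1}^m g_k(\Lambda)$, the set $\varphi(\Lambda)=\{\varphi(x):x\in\Lambda\}$ is a dense subset of $A$; (iii) there are only finitely many closed discrete sets $\Lambda\subset R$ with $\Lambda=\bigcup_{k=1}^m g_k(\Lambda)$, and the union of these sets is the maximal such solution $\Lambda^*$.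
   Context: A Pisot unit is an algebraic integer $\beta$ whose minimal polynomial over $\mathbb{Q}$ is monic with integer coefficients and constant term $\pm1$, with $|\beta|>1$, such that all other roots except $\overline\beta$ have modulus $<1$. Single-conjugate setting: either (a) $\beta$ is non-real, $R=\mathbb{Z}[\beta]$, and the minimal polynomial of $\beta$ has, apart from $\beta,\overline\beta$, exactly one root up to complex conjugation, $\beta'$, with $\varphi:\mathbb{Q}(\beta)\to\mathbb{C}$ the embedding with $\varphi(\beta)=\beta'$; or (b) $\beta$ is real, $R=\mathbb{Z}[\zeta]$ with $\zeta=e^{2\pi i/n}$, the only automorphisms of $\mathbb{Q}(\zeta)$ fixing $\beta$ are the identity and complex conjugation, and there is exactly one integer $\ell$ with $1<\ell<n/2$, $\gcd(\ell,n)=1$; $\varphi$ is the automorphism $\zeta\mapsto\zeta^\ell$. In both cases $|\beta'|<1$. A cycle of an IFS $\{h_1,\dots,h_m\}$ is a finite set $\{x_1,\dots,x_n\}$ with indices $j_1,\dots,j_n$ such that $h_{j_k}(x_k)=x_{k+1}$ for $k<n$ and $h_{j_n}(x_n)=x_1$. The attractor of a contracting IFS is the unique nonempty compact $A$ with $A=\bigcup_k g'_k(A)$. Discrete: each ball contains finitely many points. *)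

theory Defs
  imports "HOL-Analysis.Analysis" "HOL-Computational_Algebra.Computational_Algebra"
begin

abbreviation ipoly :: "int poly \<Rightarrow> complex \<Rightarrow> complex" where
  "ipoly q a \<equiv> poly (map_poly of_int q) a"

definition Zring :: "complex \<Rightarrow> complex set" where
  "Zring a = {ipoly q a | q. True}"

text \<open>p is the minimal polynomial of b over Q, normalised as a monic integer
  polynomial (monic + irreducible over Z is equivalent to irreducible over Q).\<close>
definition int_minpoly :: "int poly \<Rightarrow> complex \<Rightarrow> bool" where
  "int_minpoly p b \<longleftrightarrow> lead_coeff p = 1 \<and> irreducible p \<and> ipoly p b = 0"

definition pisot_unit :: "complex \<Rightarrow> bool" where
  "pisot_unit b \<longleftrightarrow> (\<exists>p. int_minpoly p b \<and> (coeff p 0 = 1 \<or> coeff p 0 = -1) \<and>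
      1 < norm b \<and>
      (\<forall>w. ipoly p w = 0 \<longrightarrow> w \<noteq> b \<longrightarrow> w \<noteq> cnj b \<longrightarrow> norm w < 1))"

text \<open>Case (a): b non-real, R = Z[b], phi the embedding of Q(b) sending b to b'
  (described on R = Z[b] by q(b) |-> q(b')).\<close>
definition single_conj_a :: "complex \<Rightarrow> complex set \<Rightarrow> (complex \<Rightarrow> complex) \<Rightarrow> bool" where
  "single_conj_a b R \<phi> \<longleftrightarrow> Im b \<noteq> 0 \<and> R = Zring b \<and>
     (\<exists>p b'. int_minpoly p b \<and> {w. ipoly p w = 0} = {b, cnj b, b', cnj b'} \<and>
        b' \<notin> {b, cnj b} \<and> (\<forall>q. \<phi> (ipoly q b) = ipoly q b') \<and> norm b' < 1)"

text \<open>Case (b): b real, R = Z[zeta], zeta = exp(2 pi i/n); the automorphisms of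
  Q(zeta) are zeta |-> zeta^j with j coprime to n; phi is zeta |-> zeta^l.\<close>
definition single_conj_b :: "complex \<Rightarrow> complex set \<Rightarrow> (complex \<Rightarrow> complex) \<Rightarrow> bool" where
  "single_conj_b b R \<phi> \<longleftrightarrow> Im b = 0 \<and>
     (\<exists>n::nat. \<exists>l::nat. n \<ge> 1 \<and>
        (let \<zeta> = exp (2 * pi * \<i> / of_nat n) in
          R = Zring \<zeta> \<and> b \<in> R \<and>
          (\<forall>j q. j < n \<and> coprime j n \<and> ipoly q \<zeta> = b \<and> ipoly q (\<zeta> ^ j) = b
                 \<longrightarrow> j = 1 \<or> j = n - 1) \<and>
          {k::nat. 1 < k \<and> 2 * k < n \<and> coprime k n} = {l} \<and>
          (\<forall>q. \<phi> (ipoly q \<zeta>) = ipoly q (\<zeta> ^ l)) \<and>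
          norm (\<phi> b) < 1))"

definition single_conjugate_setting :: "complex \<Rightarrow> complex set \<Rightarrow> (complex \<Rightarrow> complex) \<Rightarrow> bool" where
  "single_conjugate_setting b R \<phi> \<longleftrightarrow> pisot_unit b \<and>
     (single_conj_a b R \<phi> \<or> single_conj_b b R \<phi>)"

definition is_cycle :: "(nat \<Rightarrow> complex \<Rightarrow> complex) \<Rightarrow> nat \<Rightarrow> complex list \<Rightarrow> bool" where
  "is_cycle h m xs \<longleftrightarrow> xs \<noteq> [] \<and> (\<exists>js. length js = length xs \<and>
     (\<forall>k < length xs. js ! k < m \<and> h (js ! k) (xs ! k) = xs ! ((k + 1) mod length xs)))"

definition discrete_set :: "complex set \<Rightarrow> bool" where
  "discrete_set L \<longleftrightarrow> (\<forall>c r. finite (L \<inter> ball c r))"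

end

(* The map x \<mapsto> (x, \<phi> x) sends R to a discrete subset of C^2: an element q(\<gamma>) of
   R = Z[\<gamma>] reduces modulo a monic P to a polynomial of degree below deg P, whose coefficients
   Lagrange interpolation bounds by its values at \<gamma>, cnj \<gamma>, w, cnj w.  These are enough nodes:
   in case (a) P is the minimal polynomial of \<beta>, whose roots are simple; in case (b) the
   uniqueness of l forces n \<in> {5, 8, 10, 12}, where \<zeta> has degree 4.
   Since \<phi> conjugates g_k to the contraction g'_k, cycles go to cycles, and a finite set covered
   by its own images under the g'_k lies in A.  For a discrete solution \<Lambda>, the points of norm at
   most \<rho> + 1 (\<rho> the escape radius of the expanding maps g_k) form a finite set containing
   their own g_k-preimages in \<Lambda>, so their images lie in A; all other points of \<Lambda> arise from
   them by applying the g_k.  Hence every solution lies in the discrete set {x \<in> R. \<phi> x \<in> A}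
   and is determined by its finite part in the disc of radius \<rho> + 1, so there are finitely many,
   and their union is again a solution.  Density holds as \<phi> ` \<Lambda> is invariant under the g'_k. *)

theory Submission
  imports Defs
begin

section \<open>Contracting and expanding affine systems\<close>

locale affine_attractor =
  fixes c :: "'a::{real_normed_field,heine_borel}" and d :: "nat \<Rightarrow> 'a"
    and m :: nat and A :: "'a set"
  assumes contracting: "norm c < 1"
    and compact: "compact A" and nonempty: "A \<noteq> {}"
    and self_similar: "A = (\<Union>k<m. (\<lambda>x. c * x + d k) ` A)"
begin

lemma image_in_attractor: "k < m \<Longrightarrow> a \<in> A \<Longrightarrow> c * a + d k \<in> A"
  by (subst self_similar) blast

lemma infdist_image_le:
  assumes "k < m"
  shows "infdist (c * y + d k) A \<le> norm c * infdist y A"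
proof -
  obtain a where a: "a \<in> A" "infdist y A = dist y a"
    using infdist_attains_inf[OF compact_imp_closed[OF compact] nonempty] by blast
  have "infdist (c * y + d k) A \<le> dist (c * y + d k) (c * a + d k)"
    using assms a(1) by (intro infdist_le image_in_attractor)
  also have "\<dots> = norm c * dist y a"
    by (simp add: dist_norm norm_mult[symmetric] right_diff_distrib)
  finally show ?thesis
    using a(2) by simp
qed

(* The point of P farthest from A is the image of a point of P, so its distance from A is at
   most norm c times the maximal distance, which must therefore be 0. *)
lemma finite_backward_invariant_subset:
  assumes "finite P" and backward: "\<And>p. p \<in> P \<Longrightarrow> \<exists>k<m. \<exists>q\<in>P. p = c * q + d k"
  shows "P \<subseteq> A"
proof (cases "P = {}")
  case False
  define M where "M = Max ((\<lambda>p. infdist p A) ` P)"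
  have le_M: "infdist p A \<le> M" if "p \<in> P" for p
    unfolding M_def using assms(1) that by simp
  have "M \<in> (\<lambda>p. infdist p A) ` P"
    unfolding M_def using assms(1) False by (intro Max_in) auto
  then obtain p where "p \<in> P" "M = infdist p A"
    by blast
  then obtain k q where "k < m" "q \<in> P" "p = c * q + d k"
    using backward by blast
  then have "M \<le> norm c * infdist q A"
    using \<open>M = infdist p A\<close> infdist_image_le by simp
  also have "\<dots> \<le> norm c * M"
    using le_M[OF \<open>q \<in> P\<close>] by (simp add: mult_left_mono)
  finally have "(1 - norm c) * M \<le> 0"
    by (simp add: algebra_simps)
  with contracting have "M \<le> 0"
    by (simp add: mult_le_0_iff)
  show ?thesis
  proof
    fix p assume "p \<in> P"
    then have "infdist p A = 0"
      using le_M \<open>M \<le> 0\<close> infdist_nonneg[of p A] by (meson antisym order.trans)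
    then have "p \<in> closure A"
      using in_closure_iff_infdist_zero[OF nonempty] by blast
    then show "p \<in> A"
      using closure_closed[OF compact_imp_closed[OF compact]] by simp
  qed
qed simp

lemma forward_invariant_approximates:
  assumes forward: "\<And>p k. p \<in> P \<Longrightarrow> k < m \<Longrightarrow> c * p + d k \<in> P"
    and "p0 \<in> P" and D: "\<And>a. a \<in> A \<Longrightarrow> dist p0 a \<le> D" and "a \<in> A"
  shows "\<exists>p\<in>P. dist p a \<le> norm c ^ n * D"
  using \<open>a \<in> A\<close>
proof (induction n arbitrary: a)
  case 0
  with D \<open>p0 \<in> P\<close> show ?case
    by force
next
  case (Suc n)
  from Suc.prems have "a \<in> (\<Union>k<m. (\<lambda>x. c * x + d k) ` A)"
    by (subst (asm) self_similar)
  then obtain k a' where "k < m" "a' \<in> A" "a = c * a' + d k"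
    by blast
  moreover obtain p where "p \<in> P" "dist p a' \<le> norm c ^ n * D"
    using Suc.IH \<open>a' \<in> A\<close> by blast
  moreover have "dist (c * p + d k) (c * a' + d k) = norm c * dist p a'"
    by (simp add: dist_norm norm_mult[symmetric] right_diff_distrib)
  ultimately have "dist (c * p + d k) a \<le> norm c ^ Suc n * D"
    by (simp add: mult_left_mono mult.assoc)
  with forward[OF \<open>p \<in> P\<close> \<open>k < m\<close>] show ?case
    by blast
qed

lemma subset_closure_of_forward_invariant:
  assumes "P \<noteq> {}" and forward: "\<And>p k. p \<in> P \<Longrightarrow> k < m \<Longrightarrow> c * p + d k \<in> P"
  shows "A \<subseteq> closure P"
proof
  obtain p0 where "p0 \<in> P"
    using assms(1) by blast
  obtain D0 where D0: "\<And>a. a \<in> A \<Longrightarrow> dist p0 a \<le> D0"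
    using compact_imp_bounded[OF compact] unfolding bounded_any_center[of _ p0] by blast
  define D where "D = max D0 1"
  have D: "dist p0 a \<le> D" if "a \<in> A" for a
    using D0[OF that] by (simp add: D_def)
  fix a assume "a \<in> A"
  show "a \<in> closure P"
    unfolding closure_approachable
  proof (intro allI impI)
    fix e :: real assume "e > 0"
    then have "e / D > 0"
      by (simp add: D_def)
    then obtain n where "norm c ^ n < e / D"
      using real_arch_pow_inv contracting by blast
    then have "norm c ^ n * D < e"
      by (simp add: D_def pos_less_divide_eq)
    with forward_invariant_approximates[OF forward \<open>p0 \<in> P\<close> D \<open>a \<in> A\<close>]
    show "\<exists>p\<in>P. dist p a < e"
      by (meson le_less_trans)
  qed
qed

end

(* Outside the disc of this radius each map y \<mapsto> \<beta> * y + z k increases the norm. *)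
definition escape_radius :: "'a::real_normed_field \<Rightarrow> (nat \<Rightarrow> 'a) \<Rightarrow> nat \<Rightarrow> real" where
  "escape_radius \<beta> z m = (\<Sum>k<m. norm (z k)) / (norm \<beta> - 1)"

lemma norm_preimage_le:
  fixes \<beta> :: "'a::real_normed_field"
  assumes "1 < norm \<beta>" "k < m" "x = \<beta> * y + z k"
  shows "norm y - escape_radius \<beta> z m \<le> (norm x - escape_radius \<beta> z m) / norm \<beta>"
proof -
  define Z where "Z = (\<Sum>k<m. norm (z k))"
  have "norm (z k) \<le> Z"
    unfolding Z_def using assms(2) by (intro member_le_sum) auto
  have "norm \<beta> * norm y = norm (x - z k)"
    using assms(3) by (simp add: norm_mult[symmetric])
  also have "\<dots> \<le> norm x + Z"
    using norm_triangle_ineq4[of x "z k"] \<open>norm (z k) \<le> Z\<close> by linarith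
  also have "Z = escape_radius \<beta> z m * (norm \<beta> - 1)"
    using assms(1) by (simp add: escape_radius_def Z_def)
  finally have "(norm y - escape_radius \<beta> z m) * norm \<beta> \<le> norm x - escape_radius \<beta> z m"
    by (simp add: algebra_simps)
  then show ?thesis
    using assms(1) by (subst pos_le_divide_eq) auto
qed

lemma preimage_in_escape_disc:
  fixes \<beta> :: "'a::real_normed_field"
  assumes "1 < norm \<beta>" "k < m" "x = \<beta> * y + z k" "norm x \<le> escape_radius \<beta> z m + 1"
  shows "norm y \<le> escape_radius \<beta> z m + 1"
proof -
  have "norm y - escape_radius \<beta> z m \<le> (norm x - escape_radius \<beta> z m) / norm \<beta>"
    using norm_preimage_le assms(1-3) by blast
  also have "\<dots> \<le> 1"
    using assms(1,4) by (subst pos_divide_le_eq) auto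
  finally show ?thesis
    by simp
qed

lemma self_similar_induct:
  fixes \<beta> :: "'a::real_normed_field"
  assumes "x \<in> L" and expanding: "1 < norm \<beta>"
    and backward: "L \<subseteq> (\<Union>k<m. (\<lambda>y. \<beta> * y + z k) ` L)"
    and base: "\<And>x. x \<in> L \<Longrightarrow> norm x \<le> escape_radius \<beta> z m + 1 \<Longrightarrow> Q x"
    and step: "\<And>y k. y \<in> L \<Longrightarrow> k < m \<Longrightarrow> Q y \<Longrightarrow> Q (\<beta> * y + z k)"
  shows "Q x"
proof -
  let ?\<rho> = "escape_radius \<beta> z m"
  have "\<forall>x\<in>L. norm x - ?\<rho> \<le> norm \<beta> ^ n \<longrightarrow> Q x" for n
  proof (induction n)
    case 0
    then show ?case
      using base by auto
  next
    case (Suc n)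
    show ?case
    proof (intro ballI impI)
      fix x assume "x \<in> L" and x: "norm x - ?\<rho> \<le> norm \<beta> ^ Suc n"
      then obtain k y where "k < m" "y \<in> L" and xy: "x = \<beta> * y + z k"
        using backward by blast
      have "norm y - ?\<rho> \<le> (norm x - ?\<rho>) / norm \<beta>"
        using norm_preimage_le expanding \<open>k < m\<close> xy by blast
      also have "\<dots> \<le> norm \<beta> ^ n"
        using x expanding by (subst pos_divide_le_eq) (auto simp: mult.commute)
      finally have "Q y"
        using Suc.IH \<open>y \<in> L\<close> by blast
      then show "Q x"
        using step \<open>y \<in> L\<close> \<open>k < m\<close> xy by blast
    qed
  qed
  moreover obtain n where "norm x - ?\<rho> < norm \<beta> ^ n"
    using real_arch_pow[OF expanding] by blast
  ultimately show ?thesis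
    using assms(1) less_imp_le by blast
qed

lemma self_similar_subset_if_agree_near_origin:
  fixes \<beta> :: "'a::real_normed_field"
  assumes expanding: "1 < norm \<beta>"
    and L1: "L1 \<subseteq> (\<Union>k<m. (\<lambda>y. \<beta> * y + z k) ` L1)"
    and L2: "(\<Union>k<m. (\<lambda>y. \<beta> * y + z k) ` L2) \<subseteq> L2"
    and agree: "L1 \<inter> cball 0 (escape_radius \<beta> z m + 1) = L2 \<inter> cball 0 (escape_radius \<beta> z m + 1)"
  shows "L1 \<subseteq> L2"
proof
  fix x assume "x \<in> L1"
  from this expanding L1 show "x \<in> L2"
  proof (rule self_similar_induct[where Q = "\<lambda>x. x \<in> L2"])
    fix x assume "x \<in> L1" "norm x \<le> escape_radius \<beta> z m + 1"
    then have "x \<in> L1 \<inter> cball 0 (escape_radius \<beta> z m + 1)"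
      by simp
    then show "x \<in> L2"
      unfolding agree by (rule IntD1)
  next
    fix y k assume "y \<in> L2" "k < m"
    then show "\<beta> * y + z k \<in> L2"
      using L2 by blast
  qed
qed

lemma self_similar_eq_if_agree_near_origin:
  fixes \<beta> :: "'a::real_normed_field"
  assumes "1 < norm \<beta>"
    and L1: "L1 = (\<Union>k<m. (\<lambda>y. \<beta> * y + z k) ` L1)" and L2: "L2 = (\<Union>k<m. (\<lambda>y. \<beta> * y + z k) ` L2)"
    and agree: "L1 \<inter> cball 0 (escape_radius \<beta> z m + 1) = L2 \<inter> cball 0 (escape_radius \<beta> z m + 1)"
  shows "L1 = L2"
proof
  show "L1 \<subseteq> L2"
    using assms(1) equalityD1[OF L1] equalityD2[OF L2] agree
    by (rule self_similar_subset_if_agree_near_origin)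
  show "L2 \<subseteq> L1"
    using assms(1) equalityD1[OF L2] equalityD2[OF L1] agree[symmetric]
    by (rule self_similar_subset_if_agree_near_origin)
qed

section \<open>An expanding system and its contracting conjugate\<close>

lemma discrete_set_imp_closed: "discrete_set L \<Longrightarrow> closed L"
  unfolding discrete_set_def closed_limpt islimpt_eq_infinite_ball by (metis zero_less_one)

lemma discrete_set_subset: "discrete_set L \<Longrightarrow> L' \<subseteq> L \<Longrightarrow> discrete_set L'"
  unfolding discrete_set_def by (meson finite_subset inf_mono order_refl)

lemma discrete_set_finite_Int_cball: "discrete_set L \<Longrightarrow> finite (L \<inter> cball c r)"
  unfolding discrete_set_def
  by (rule finite_subset[of _ "L \<inter> ball c (r + 1)"]) auto

lemma Union_self_similar:
  assumes "\<And>L. L \<in> S \<Longrightarrow> L = (\<Union>k<m. f k ` L)"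
  shows "\<Union>S = (\<Union>k<m. f k ` \<Union>S)"
proof
  show "\<Union>S \<subseteq> (\<Union>k<m. f k ` \<Union>S)"
    using assms by blast
  show "(\<Union>k<m. f k ` \<Union>S) \<subseteq> \<Union>S"
    using assms by blast
qed

lemma is_cycle_map:
  assumes "is_cycle h m xs"
    and commute: "\<And>k x. k < m \<Longrightarrow> x \<in> set xs \<Longrightarrow> f (h k x) = h' k (f x)"
  shows "is_cycle h' m (map f xs)"
proof -
  obtain js where "xs \<noteq> []" "length js = length xs"
    and js: "\<And>i. i < length xs \<Longrightarrow> js ! i < m \<and> h (js ! i) (xs ! i) = xs ! ((i + 1) mod length xs)"
    using assms(1) unfolding is_cycle_def by blast
  have "h' (js ! i) (f (xs ! i)) = f (xs ! ((i + 1) mod length xs))" if "i < length xs" for i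
    using js[OF that] commute[of "js ! i" "xs ! i"] that by simp
  then show ?thesis
    unfolding is_cycle_def using \<open>xs \<noteq> []\<close> \<open>length js = length xs\<close> js
    by (intro conjI exI[of _ js]) auto
qed

lemma is_cycle_predecessor:
  assumes "is_cycle h m xs" "x \<in> set xs"
  shows "\<exists>k<m. \<exists>y\<in>set xs. x = h k y"
proof -
  obtain js where "length js = length xs"
    and js: "\<And>i. i < length xs \<Longrightarrow> js ! i < m \<and> h (js ! i) (xs ! i) = xs ! ((i + 1) mod length xs)"
    using assms(1) unfolding is_cycle_def by blast
  obtain i where i: "i < length xs" "x = xs ! i"
    using assms(2) by (auto simp: in_set_conv_nth)
  define i' where "i' = (if i = 0 then length xs - 1 else i - 1)"
  have "i' < length xs" "(i' + 1) mod length xs = i"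
    using i by (auto simp: i'_def)
  then have "js ! i' < m" "x = h (js ! i') (xs ! i')" "xs ! i' \<in> set xs"
    using js[of i'] i by auto
  then show ?thesis
    by blast
qed

locale conjugate_ifs = affine_attractor "\<phi> \<beta>" "\<lambda>k. \<phi> (z k)" m A
  for \<beta> :: complex and \<phi> :: "complex \<Rightarrow> complex" and z m A +
  fixes R :: "complex set"
  assumes expanding: "1 < norm \<beta>"
    and \<phi>_affine: "\<And>x k. x \<in> R \<Longrightarrow> k < m \<Longrightarrow> \<phi> (\<beta> * x + z k) = \<phi> \<beta> * \<phi> x + \<phi> (z k)"
    and finite_bounded: "\<And>r s. finite {x \<in> R. norm x \<le> r \<and> norm (\<phi> x) \<le> s}"
begin

lemma cycle_image:
  assumes "set xs \<subseteq> R" "is_cycle (\<lambda>k x. \<beta> * x + z k) m xs"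
  shows "is_cycle (\<lambda>k x. \<phi> \<beta> * x + \<phi> (z k)) m (map \<phi> xs) \<and> \<phi> ` set xs \<subseteq> A"
proof
  show cycle: "is_cycle (\<lambda>k x. \<phi> \<beta> * x + \<phi> (z k)) m (map \<phi> xs)"
    using assms(2) by (rule is_cycle_map) (use assms(1) \<phi>_affine in blast)
  show "\<phi> ` set xs \<subseteq> A"
    using is_cycle_predecessor[OF cycle] by (intro finite_backward_invariant_subset) auto
qed

lemma solution_image_subset:
  assumes "L \<subseteq> R" "discrete_set L" and backward: "L \<subseteq> (\<Union>k<m. (\<lambda>x. \<beta> * x + z k) ` L)"
  shows "\<phi> ` L \<subseteq> A"
proof -
  let ?\<rho> = "escape_radius \<beta> z m"
  define F where "F = L \<inter> cball 0 (?\<rho> + 1)"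
  have "finite F"
    unfolding F_def using assms(2) by (rule discrete_set_finite_Int_cball)
  have "\<phi> ` F \<subseteq> A"
  proof (rule finite_backward_invariant_subset)
    fix p assume "p \<in> \<phi> ` F"
    then obtain x where "x \<in> F" "p = \<phi> x"
      by blast
    then obtain k y where "k < m" "y \<in> L" and xy: "x = \<beta> * y + z k"
      using backward F_def by blast
    have "y \<in> F"
      using preimage_in_escape_disc[where z = z, OF expanding \<open>k < m\<close> xy] \<open>x \<in> F\<close> \<open>y \<in> L\<close> by (simp add: F_def)
    moreover have "p = \<phi> \<beta> * \<phi> y + \<phi> (z k)"
      using \<open>p = \<phi> x\<close> xy \<phi>_affine \<open>y \<in> L\<close> \<open>k < m\<close> assms(1) by blast
    ultimately show "\<exists>k<m. \<exists>q\<in>\<phi> ` F. p = \<phi> \<beta> * q + \<phi> (z k)"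
      using \<open>k < m\<close> by blast
  qed (use \<open>finite F\<close> in simp)
  show ?thesis
  proof safe
    fix x assume "x \<in> L"
    from this expanding backward show "\<phi> x \<in> A"
    proof (rule self_similar_induct[where Q = "\<lambda>x. \<phi> x \<in> A"])
      fix x assume "x \<in> L" "norm x \<le> ?\<rho> + 1"
      then show "\<phi> x \<in> A"
        using \<open>\<phi> ` F \<subseteq> A\<close> by (auto simp: F_def)
    next
      fix y k assume "y \<in> L" "k < m" "\<phi> y \<in> A"
      then show "\<phi> (\<beta> * y + z k) \<in> A"
        using \<phi>_affine assms(1) image_in_attractor by auto
    qed
  qed
qed

lemma attractor_subset_closure_solution_image:
  assumes "L \<subseteq> R" "L \<noteq> {}" and forward: "\<And>x k. x \<in> L \<Longrightarrow> k < m \<Longrightarrow> \<beta> * x + z k \<in> L"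
  shows "A \<subseteq> closure (\<phi> ` L)"
proof (rule subset_closure_of_forward_invariant)
  fix p k assume "p \<in> \<phi> ` L" "k < m"
  then obtain x where "x \<in> L" "p = \<phi> x"
    by blast
  then have "\<phi> \<beta> * p + \<phi> (z k) = \<phi> (\<beta> * x + z k)"
    using \<phi>_affine assms(1) \<open>k < m\<close> by auto
  then show "\<phi> \<beta> * p + \<phi> (z k) \<in> \<phi> ` L"
    using forward[OF \<open>x \<in> L\<close> \<open>k < m\<close>] by simp
qed (use assms(2) in simp)

lemma discrete_attractor_preimage: "discrete_set {x \<in> R. \<phi> x \<in> A}"
  unfolding discrete_set_def
proof (intro allI)
  fix c :: complex and r :: real
  obtain s where s: "\<And>a. a \<in> A \<Longrightarrow> norm a \<le> s"
    using compact_imp_bounded[OF compact] unfolding bounded_iff by blast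
  have "norm x \<le> norm c + r" if "x \<in> ball c r" for x
    using norm_triangle_ineq2[of x c] that by (simp add: dist_norm norm_minus_commute)
  with s have "{x \<in> R. \<phi> x \<in> A} \<inter> ball c r \<subseteq> {x \<in> R. norm x \<le> norm c + r \<and> norm (\<phi> x) \<le> s}"
    by blast
  then show "finite ({x \<in> R. \<phi> x \<in> A} \<inter> ball c r)"
    using finite_bounded by (rule finite_subset)
qed

lemma solutions_finite_with_maximum:
  defines "S \<equiv> {L. L \<subseteq> R \<and> closed L \<and> discrete_set L \<and> L = (\<Union>k<m. (\<lambda>x. \<beta> * x + z k) ` L)}"
  shows "finite S \<and> \<Union>S \<in> S \<and> (\<forall>L\<in>S. L \<subseteq> \<Union>S)"
proof -
  let ?D = "{x \<in> R. \<phi> x \<in> A}"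
  let ?B = "cball 0 (escape_radius \<beta> z m + 1)"
  have in_D: "L \<subseteq> ?D" if "L \<in> S" for L
    using that solution_image_subset[of L] unfolding S_def by blast
  have in_S: "L \<in> S" if "L \<subseteq> R" "discrete_set L" "L = (\<Union>k<m. (\<lambda>x. \<beta> * x + z k) ` L)" for L
    using that discrete_set_imp_closed[OF that(2)] unfolding S_def by (intro CollectI conjI)
  have "\<Union>S \<in> S"
  proof (rule in_S)
    show "\<Union>S \<subseteq> R"
      unfolding S_def by blast
    show "discrete_set (\<Union>S)"
      by (rule discrete_set_subset[OF discrete_attractor_preimage]) (use in_D in blast)
    show "\<Union>S = (\<Union>k<m. (\<lambda>x. \<beta> * x + z k) ` \<Union>S)"
      by (rule Union_self_similar) (unfold S_def, blast)
  qed
  have "inj_on (\<lambda>L. L \<inter> ?B) S"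
  proof (rule inj_onI)
    fix L1 L2 assume "L1 \<in> S" "L2 \<in> S" and agree: "L1 \<inter> ?B = L2 \<inter> ?B"
    then have "L1 = (\<Union>k<m. (\<lambda>x. \<beta> * x + z k) ` L1)" "L2 = (\<Union>k<m. (\<lambda>x. \<beta> * x + z k) ` L2)"
      unfolding S_def by blast+
    from this agree show "L1 = L2"
      by (rule self_similar_eq_if_agree_near_origin[OF expanding])
  qed
  moreover have "(\<lambda>L. L \<inter> ?B) ` S \<subseteq> Pow (?D \<inter> ?B)"
    using in_D by blast
  moreover have "finite (?D \<inter> ?B)"
    using discrete_attractor_preimage by (rule discrete_set_finite_Int_cball)
  ultimately have "finite S"
    by (meson finite_Pow_iff finite_imageD finite_subset)
  with \<open>\<Union>S \<in> S\<close> show ?thesis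
    by blast
qed

end

section \<open>Discreteness of Z[\<gamma>] under a conjugate embedding\<close>

lemma map_poly_of_int_add [simp]:
  "map_poly (of_int :: int \<Rightarrow> 'a::comm_ring_1) (p + q) = map_poly of_int p + map_poly of_int q"
  by (rule poly_eqI) (simp add: coeff_map_poly)

lemma map_poly_of_int_mult [simp]:
  "map_poly (of_int :: int \<Rightarrow> 'a::comm_ring_1) (p * q) = map_poly of_int p * map_poly of_int q"
  by (rule poly_eqI) (simp add: coeff_map_poly coeff_mult)

lemma map_poly_of_int_smult [simp]:
  "map_poly (of_int :: int \<Rightarrow> 'a::comm_ring_1) (smult c p) = smult (of_int c) (map_poly of_int p)"
  by (rule map_poly_smult) simp_all

lemma map_poly_of_int_pCons [simp]:
  "map_poly (of_int :: int \<Rightarrow> 'a::comm_ring_1) (pCons c p) = pCons (of_int c) (map_poly of_int p)"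
  by (rule map_poly_pCons) simp

lemma map_poly_of_int_pderiv:
  "map_poly (of_int :: int \<Rightarrow> 'a::idom) (pderiv p) = pderiv (map_poly of_int p)"
  by (rule poly_eqI) (simp add: coeff_map_poly coeff_pderiv)

lemma degree_map_poly_of_int [simp]:
  "degree (map_poly (of_int :: int \<Rightarrow> 'a::{comm_ring_1,ring_char_0}) p) = degree p"
  by (rule degree_map_poly) simp

lemma map_poly_of_int_eq_0_iff [simp]:
  "map_poly (of_int :: int \<Rightarrow> 'a::{comm_ring_1,ring_char_0}) p = 0 \<longleftrightarrow> p = 0"
  by (rule map_poly_eq_0_iff) simp_all

lemma ipoly_cnj: "ipoly q (cnj x) = cnj (ipoly q x)"
  by (subst poly_cnj_real) (auto simp: coeff_map_poly)

lemma ipoly_nonzero_constant: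
  assumes "degree S = 0" "S \<noteq> 0"
  shows "ipoly S x \<noteq> 0"
proof -
  obtain c where "S = [:c:]"
    using assms(1) by (rule degree_eq_zeroE)
  with assms(2) show ?thesis
    by simp
qed

lemma minimal_vanishing_poly_pseudo_divides:
  fixes Q0 F :: "int poly"
  assumes minimal: "\<And>S. S \<noteq> 0 \<Longrightarrow> ipoly S r = 0 \<Longrightarrow> degree Q0 \<le> degree S"
    and Q0: "Q0 \<noteq> 0" "ipoly Q0 r = 0" and F: "ipoly F r = 0"
  obtains a s where "a \<noteq> 0" "smult a F = Q0 * s"
proof -
  define t where "t = pseudo_mod F Q0"
  obtain a s where "a \<noteq> 0" and div: "smult a F = Q0 * s + t" and "t = 0 \<or> degree t < degree Q0"
    using pseudo_mod[OF Q0(1)] unfolding t_def by blast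
  moreover have "ipoly t r = 0"
    using arg_cong[OF div, of "\<lambda>f. ipoly f r"] F Q0(2) by simp
  ultimately have "t = 0"
    using minimal[of t] by (meson not_le)
  with \<open>a \<noteq> 0\<close> div show ?thesis
    using that by simp
qed

(* p divides a vanishing polynomial of minimal degree, since it is prime and pseudo-division
   by that polynomial leaves no remainder. *)
lemma irreducible_int_poly_degree_le:
  fixes p Q :: "int poly"
  assumes irr: "irreducible p" and p: "ipoly p r = 0" and Q: "ipoly Q r = 0" "Q \<noteq> 0"
  shows "degree p \<le> degree Q"
proof -
  define vanishing where "vanishing S \<longleftrightarrow> S \<noteq> 0 \<and> ipoly S r = 0" for S :: "int poly"
  define Q0 where "Q0 = arg_min degree vanishing"
  have Q0: "Q0 \<noteq> 0" "ipoly Q0 r = 0"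
    and minimal: "\<And>S. S \<noteq> 0 \<Longrightarrow> ipoly S r = 0 \<Longrightarrow> degree Q0 \<le> degree S"
    using arg_min_nat_lemma[of vanishing Q degree, folded Q0_def] Q by (auto simp: vanishing_def)
  obtain a s where "a \<noteq> 0" and div: "smult a p = Q0 * s"
    using minimal_vanishing_poly_pseudo_divides[OF minimal Q0 p] by blast
  then have "p dvd Q0 * s"
    by (metis dvd_refl dvd_smult)
  then consider "p dvd Q0" | "p dvd s"
    using irreducible_imp_prime_elem[OF irr] prime_elem_dvd_mult_iff by blast
  then show ?thesis
  proof cases
    case 1
    then have "degree p \<le> degree Q0"
      using Q0(1) by (rule dvd_imp_degree_le)
    also have "\<dots> \<le> degree Q"
      using minimal Q by simp
    finally show ?thesis .
  next
    case 2
    then obtain u where "s = p * u"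
      by (auto simp: dvd_def)
    with div have "p * [:a:] = p * (Q0 * u)"
      by (simp add: ac_simps)
    moreover have "p \<noteq> 0"
      using irr by (simp add: irreducible_def)
    ultimately have a: "[:a:] = Q0 * u"
      by (metis mult_cancel_left)
    then have "u \<noteq> 0"
      using \<open>a \<noteq> 0\<close> by auto
    with a Q0(1) have "degree Q0 = 0"
      by (metis add_is_0 degree_mult_eq degree_pCons_0)
    with Q0 show ?thesis
      using ipoly_nonzero_constant by blast
  qed
qed

lemma degree_irreducible_int_poly_eq_card_roots:
  fixes p :: "int poly"
  assumes irr: "irreducible p" and b: "ipoly p b = 0"
  shows "degree p = card {w. ipoly p w = 0}"
proof -
  define P :: "complex poly" where "P = map_poly of_int p"
  have "p \<noteq> 0"
    using irr by auto
  have "degree p \<noteq> 0"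
    using b \<open>p \<noteq> 0\<close> ipoly_nonzero_constant by blast
  have "rsquarefree P"
    unfolding rsquarefree_roots
  proof (intro allI notI)
    fix a assume "poly P a = 0 \<and> poly (pderiv P) a = 0"
    then have "ipoly p a = 0" "ipoly (pderiv p) a = 0"
      by (auto simp: P_def map_poly_of_int_pderiv)
    moreover have "pderiv p \<noteq> 0"
      using \<open>degree p \<noteq> 0\<close> by (simp add: pderiv_eq_0_iff)
    ultimately have "degree p \<le> degree (pderiv p)"
      using irreducible_int_poly_degree_le[OF irr] by blast
    with \<open>degree p \<noteq> 0\<close> show False
      by (simp add: degree_pderiv)
  qed
  then have "smult (lead_coeff P) (\<Prod>w | poly P w = 0. [:-w, 1:]) = P"
    by (rule complex_poly_decompose_rsquarefree)
  then have "degree P = degree (\<Prod>w | poly P w = 0. [:-w, 1:])"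
    using \<open>p \<noteq> 0\<close> by (metis P_def degree_smult_eq leading_coeff_0_iff map_poly_of_int_eq_0_iff)
  also have "\<dots> = (\<Sum>w | poly P w = 0. degree [:-w, 1:])"
    by (rule degree_prod_sum_eq) simp
  also have "\<dots> = card {w. poly P w = 0}"
    by simp
  finally show ?thesis
    by (simp add: P_def)
qed

definition lagrange_basis :: "'a::field set \<Rightarrow> 'a \<Rightarrow> 'a poly" where
  "lagrange_basis N a = smult (inverse (\<Prod>b\<in>N - {a}. a - b)) (\<Prod>b\<in>N - {a}. [:-b, 1:])"

lemma poly_lagrange_basis:
  assumes "finite N" "a \<in> N" "x \<in> N"
  shows "poly (lagrange_basis N a) x = (if x = a then 1 else 0)"
proof -
  have "(\<Prod>b\<in>N - {a}. a - b) \<noteq> 0"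
    using assms by simp
  moreover have "x \<noteq> a \<Longrightarrow> (\<Prod>b\<in>N - {a}. x - b) = 0"
    using assms by simp
  ultimately show ?thesis
    by (simp add: lagrange_basis_def poly_prod)
qed

lemma degree_lagrange_basis:
  assumes "finite N" "a \<in> N"
  shows "degree (lagrange_basis N a) < card N"
proof -
  have "degree (lagrange_basis N a) \<le> degree (\<Prod>b\<in>N - {a}. [:-b, 1:])"
    by (simp add: lagrange_basis_def)
  also have "\<dots> \<le> card (N - {a})"
    using degree_prod_sum_le[of "N - {a}" "\<lambda>b. [:-b, 1:]"] assms by simp
  also have "\<dots> < card N"
    using assms by (rule card_Diff1_less)
  finally show ?thesis .
qed

lemma lagrange_interpolation:
  assumes "finite N" "degree Q < card N"
  shows "Q = (\<Sum>a\<in>N. smult (poly Q a) (lagrange_basis N a))"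
proof (rule poly_eqI_degree[of N])
  fix x assume "x \<in> N"
  then show "poly Q x = poly (\<Sum>a\<in>N. smult (poly Q a) (lagrange_basis N a)) x"
    using assms(1) by (simp add: poly_sum poly_lagrange_basis if_distrib cong: if_cong)
next
  show "degree (\<Sum>a\<in>N. smult (poly Q a) (lagrange_basis N a)) < card N"
    using assms(2) degree_lagrange_basis[OF assms(1)]
    by (intro degree_sum_less) (auto intro: le_less_trans[OF degree_smult_le])
qed fact

lemma norm_coeff_le_sum:
  fixes p :: "'a::real_normed_vector poly"
  shows "norm (coeff p j) \<le> (\<Sum>i\<le>degree p. norm (coeff p i))"
  by (cases "j \<le> degree p") (auto intro: member_le_sum simp: coeff_eq_0 sum_nonneg)

lemma coeff_bounded_by_values:
  fixes N :: "'a::real_normed_field set"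
  assumes "finite N"
  obtains K where "\<And>Q M j. degree Q < card N \<Longrightarrow> (\<forall>a\<in>N. norm (poly Q a) \<le> M) \<Longrightarrow>
                            norm (coeff Q j) \<le> K * M"
proof
  define K where "K = (\<Sum>a\<in>N. \<Sum>i\<le>degree (lagrange_basis N a). norm (coeff (lagrange_basis N a) i))"
  fix Q :: "'a poly" and M j
  assume deg: "degree Q < card N" and M: "\<forall>a\<in>N. norm (poly Q a) \<le> M"
  then obtain a where "a \<in> N"
    by fastforce
  with M have "M \<ge> 0"
    by (meson norm_ge_zero order.trans)
  have "coeff Q j = (\<Sum>a\<in>N. poly Q a * coeff (lagrange_basis N a) j)"
    by (subst lagrange_interpolation[OF assms deg]) (simp add: coeff_sum)
  also have "norm \<dots> \<le> (\<Sum>a\<in>N. M * norm (coeff (lagrange_basis N a) j))"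
    using M by (auto intro!: order.trans[OF norm_sum] sum_mono mult_right_mono simp: norm_mult)
  also have "\<dots> = M * (\<Sum>a\<in>N. norm (coeff (lagrange_basis N a) j))"
    by (simp add: sum_distrib_left)
  also have "\<dots> \<le> M * K"
    unfolding K_def using \<open>M \<ge> 0\<close> by (intro mult_left_mono sum_mono norm_coeff_le_sum) auto
  finally show "norm (coeff Q j) \<le> K * M"
    by (simp add: mult.commute)
qed

lemma finite_int_polys_bounded:
  "finite {t :: int poly. degree t < d \<and> (\<forall>j. \<bar>coeff t j\<bar> \<le> B)}" (is "finite ?T")
proof (rule finite_imageD)
  have "(\<lambda>t. restrict (coeff t) {..<d}) ` ?T \<subseteq> PiE {..<d} (\<lambda>_. {-B..B})"
    by (intro image_subsetI) (force simp: restrict_PiE_iff abs_le_iff)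
  then show "finite ((\<lambda>t. restrict (coeff t) {..<d}) ` ?T)"
    by (rule finite_subset) (intro finite_PiE; simp)
  show "inj_on (\<lambda>t. restrict (coeff t) {..<d}) ?T"
  proof (rule inj_onI, rule poly_eqI)
    fix s t j
    assume "s \<in> ?T" "t \<in> ?T" "restrict (coeff s) {..<d} = restrict (coeff t) {..<d}"
    then show "coeff s j = coeff t j"
      by (cases "j < d") (auto dest: fun_cong[of _ _ j] simp: coeff_eq_0)
  qed
qed

lemma reduce_mod_monic_int_poly:
  fixes P q :: "int poly"
  assumes "lead_coeff P = 1" and roots: "\<And>x. x \<in> X \<Longrightarrow> ipoly P x = 0" and "X \<noteq> {}"
  obtains t where "degree t < degree P" "\<And>x. x \<in> X \<Longrightarrow> ipoly t x = ipoly q x"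
proof -
  obtain u t where "pseudo_divmod q P = (u, t)"
    by force
  moreover have "P \<noteq> 0"
    using assms(1) by auto
  ultimately have "q = P * u + t" "t = 0 \<or> degree t < degree P"
    using pseudo_divmod[OF \<open>P \<noteq> 0\<close>] assms(1) by auto
  moreover have "degree P \<noteq> 0"
    using roots \<open>X \<noteq> {}\<close> \<open>P \<noteq> 0\<close> ipoly_nonzero_constant by blast
  ultimately show ?thesis
    using that[of t] roots by auto
qed

lemma finite_Zring_bounded:
  fixes \<gamma> w :: complex and P :: "int poly"
  assumes P: "lead_coeff P = 1" "ipoly P \<gamma> = 0" "ipoly P w = 0"
    and deg: "degree P \<le> card {\<gamma>, cnj \<gamma>, w, cnj w}"
    and \<phi>: "\<forall>q. \<phi> (ipoly q \<gamma>) = ipoly q w"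
  shows "finite {x \<in> Zring \<gamma>. norm x \<le> r \<and> norm (\<phi> x) \<le> s}"
proof -
  define N where "N = {\<gamma>, cnj \<gamma>, w, cnj w}"
  obtain K where K: "\<And>Q M j. degree Q < card N \<Longrightarrow> (\<forall>a\<in>N. norm (poly Q a) \<le> M) \<Longrightarrow>
                               norm (coeff Q j) \<le> K * M"
    using coeff_bounded_by_values[of N] by (auto simp: N_def)
  define T where "T = {t :: int poly. degree t < degree P \<and> (\<forall>j. \<bar>coeff t j\<bar> \<le> \<lceil>K * max r s\<rceil>)}"
  have "{x \<in> Zring \<gamma>. norm x \<le> r \<and> norm (\<phi> x) \<le> s} \<subseteq> (\<lambda>t. ipoly t \<gamma>) ` T"
    unfolding Zring_def
  proof safe
    fix q assume r: "norm (ipoly q \<gamma>) \<le> r" and s: "norm (\<phi> (ipoly q \<gamma>)) \<le> s"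
    have "\<And>x. x \<in> {\<gamma>, w} \<Longrightarrow> ipoly P x = 0"
      using P by auto
    then obtain t where "degree t < degree P" "\<And>x. x \<in> {\<gamma>, w} \<Longrightarrow> ipoly t x = ipoly q x"
      using reduce_mod_monic_int_poly[OF P(1)] by blast
    then have t: "degree t < degree P" "ipoly t \<gamma> = ipoly q \<gamma>" "ipoly t w = ipoly q w"
      by simp_all
    have "\<forall>a\<in>N. norm (ipoly t a) \<le> max r s"
      using r s t \<phi> by (auto simp: N_def ipoly_cnj)
    then have coeff_bound: "real_of_int \<bar>coeff t j\<bar> \<le> K * max r s" for j
      using K[of "map_poly of_int t"] t(1) deg by (simp add: coeff_map_poly N_def)
    have "\<bar>coeff t j\<bar> \<le> \<lceil>K * max r s\<rceil>" for j
      using coeff_bound[of j] unfolding le_ceiling_iff by linarith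
    then have "t \<in> T"
      using t(1) by (simp add: T_def)
    with t(2) show "ipoly q \<gamma> \<in> (\<lambda>t. ipoly t \<gamma>) ` T"
      by (metis image_eqI)
  qed
  moreover have "finite T"
    unfolding T_def by (rule finite_int_polys_bounded)
  ultimately show ?thesis
    using finite_subset by blast
qed

(* The degree bound is what makes x \<mapsto> (x, \<phi> x) map R = Z[\<gamma>] to a discrete subset of C^2. *)
definition conjugate_embedding :: "complex set \<Rightarrow> (complex \<Rightarrow> complex) \<Rightarrow> bool" where
  "conjugate_embedding R \<phi> \<longleftrightarrow> (\<exists>\<gamma> w P. R = Zring \<gamma> \<and> (\<forall>q. \<phi> (ipoly q \<gamma>) = ipoly q w) \<and>
     lead_coeff P = 1 \<and> ipoly P \<gamma> = 0 \<and> ipoly P w = 0 \<and> degree P \<le> card {\<gamma>, cnj \<gamma>, w, cnj w})"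

lemma conjugate_embedding_finite_bounded:
  "conjugate_embedding R \<phi> \<Longrightarrow> finite {x \<in> R. norm x \<le> r \<and> norm (\<phi> x) \<le> s}"
  unfolding conjugate_embedding_def using finite_Zring_bounded by blast

lemma conjugate_embedding_affine:
  assumes "conjugate_embedding R \<phi>" "a \<in> R" "x \<in> R" "b \<in> R"
  shows "\<phi> (a * x + b) = \<phi> a * \<phi> x + \<phi> b"
proof -
  obtain \<gamma> w where R: "R = Zring \<gamma>" and \<phi>: "\<forall>q. \<phi> (ipoly q \<gamma>) = ipoly q w"
    using assms(1) unfolding conjugate_embedding_def by blast
  obtain qa qx qb where "a = ipoly qa \<gamma>" "x = ipoly qx \<gamma>" "b = ipoly qb \<gamma>"
    using assms(2-4) unfolding R Zring_def by blast
  then have "\<phi> (a * x + b) = \<phi> (ipoly (qa * qx + qb) \<gamma>)"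
    by simp
  also have "\<dots> = ipoly (qa * qx + qb) w"
    using \<phi> by blast
  also have "\<dots> = \<phi> a * \<phi> x + \<phi> b"
    using \<phi> \<open>a = ipoly qa \<gamma>\<close> \<open>x = ipoly qx \<gamma>\<close> \<open>b = ipoly qb \<gamma>\<close> by simp
  finally show ?thesis .
qed

lemma mem_Zring_generator: "\<gamma> \<in> Zring \<gamma>"
  unfolding Zring_def by (rule CollectI, rule exI[of _ "[:0, 1:]"]) simp

section \<open>Cyclotomic fields of degree 4\<close>

lemma coprime_odd_mult_add_pow2:
  fixes a k j :: nat
  assumes "odd a" "n = k * a + 2 ^ j"
  shows "coprime a n"
proof -
  have "coprime a (2 ^ j)"
    using assms(1) by simp
  then show ?thesis
    using assms(2) by (simp add: coprime_iff_gcd_eq_1 gcd_add_mult)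
qed

lemma two_coprimes_below_half:
  fixes n :: nat
  assumes "13 \<le> n"
  shows "\<exists>a b. a \<noteq> b \<and> 1 < a \<and> 2 * a < n \<and> coprime a n \<and> 1 < b \<and> 2 * b < n \<and> coprime b n"
proof -
  have "odd n \<or> (\<exists>b\<ge>3. odd b \<and> n = 2 * b + 8) \<or> (\<exists>b\<ge>3. odd b \<and> n = 4 * b + 8) \<or>
        (\<exists>b\<ge>3. odd b \<and> n = 4 * b + 4)"
    using assms by presburger
  then consider "odd n" | b where "odd b" "3 \<le> b" "n = 2 * b + 8"
    | b where "odd b" "3 \<le> b" "n = 4 * b + 8" | b where "odd b" "3 \<le> b" "n = 4 * b + 4"
    by blast
  then show ?thesis
  proof cases
    case 1
    then have "coprime n 2" "coprime n 4"
      by (auto intro: coprime_odd_mult_add_pow2[where k = 0 and j = 1]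
                      coprime_odd_mult_add_pow2[where k = 0 and j = 2])
    with assms show ?thesis
      by (intro exI[of _ 2] exI[of _ 4]) (auto simp: coprime_commute)
  next
    case (2 b)
    then have "coprime (b + 2) n" "coprime b n"
      by (auto intro: coprime_odd_mult_add_pow2[where k = 2 and j = 2]
                      coprime_odd_mult_add_pow2[where k = 2 and j = 3])
    with 2 show ?thesis
      by (intro exI[of _ "b + 2"] exI[of _ b]) auto
  next
    case (3 b)
    then have "coprime (2 * b + 3) n" "coprime b n"
      by (auto intro: coprime_odd_mult_add_pow2[where k = 2 and j = 1]
                      coprime_odd_mult_add_pow2[where k = 4 and j = 3])
    with 3 show ?thesis
      by (intro exI[of _ "2 * b + 3"] exI[of _ b]) auto
  next
    case (4 b)
    then have "coprime (2 * b + 1) n" "coprime b n"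
      by (auto intro: coprime_odd_mult_add_pow2[where k = 2 and j = 1]
                      coprime_odd_mult_add_pow2[where k = 4 and j = 2])
    with 4 show ?thesis
      by (intro exI[of _ "2 * b + 1"] exI[of _ b]) auto
  qed
qed

lemma unique_coprime_below_half_cases:
  fixes n l :: nat
  assumes "{k. 1 < k \<and> 2 * k < n \<and> coprime k n} = {l}"
  shows "n \<in> {5, 8, 10, 12}"
proof -
  have l: "1 < l" "2 * l < n" "coprime l n"
    using assms by blast+
  have unique: "\<And>k. 1 < k \<Longrightarrow> 2 * k < n \<Longrightarrow> coprime k n \<Longrightarrow> k = l"
    using assms by blast
  have "\<not> 13 \<le> n"
    using two_coprimes_below_half unique by metis
  have "coprime (3::nat) 7" "coprime (3::nat) 11" "coprime (4::nat) 9"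
    using coprime_odd_mult_add_pow2[of 3 7 2 0] coprime_odd_mult_add_pow2[of 3 11 3 1]
      coprime_power_left_iff[of "2::nat" 2 9] by simp_all
  then have "n \<noteq> 7" "n \<noteq> 9" "n \<noteq> 11"
    using unique[of 2] unique[of 3] unique[of 4] by auto
  moreover have "n \<noteq> 6"
    using l by (cases "l = 2") auto
  ultimately show ?thesis
    using l \<open>\<not> 13 \<le> n\<close> by simp presburger
qed

lemma root_unity_pow_eq_1_iff:
  fixes n k :: nat
  assumes "1 \<le> n"
  shows "exp (2 * pi * \<i> / of_nat n) ^ k = 1 \<longleftrightarrow> n dvd k"
proof -
  have "exp (2 * pi * \<i> / of_nat n) ^ k = exp (2 * of_real pi * \<i> * of_nat k / of_nat n)"
    by (simp flip: exp_of_nat_mult add: field_simps)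
  then show ?thesis
    using complex_root_unity_eq_1[OF assms] by simp
qed

lemma pow_coprime_eq_1_iff:
  fixes \<zeta> :: "'a::monoid_mult"
  assumes order: "\<And>k. \<zeta> ^ k = 1 \<longleftrightarrow> n dvd k" and "coprime l n"
  shows "(\<zeta> ^ l) ^ k = 1 \<longleftrightarrow> n dvd k"
proof -
  have "(\<zeta> ^ l) ^ k = 1 \<longleftrightarrow> n dvd l * k"
    using order[of "l * k"] by (simp add: power_mult)
  also have "\<dots> \<longleftrightarrow> n dvd k"
    using assms(2) coprime_dvd_mult_left_iff[of n l k] by (simp add: coprime_commute mult.commute)
  finally show ?thesis .
qed

lemma pow_eq_pow_below_order:
  fixes \<zeta> :: "'a::field"
  assumes order: "\<And>k. \<zeta> ^ k = 1 \<longleftrightarrow> n dvd k" and "a < n" "b < n" "\<zeta> ^ a = \<zeta> ^ b"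
  shows "a = b"
proof -
  have "\<zeta> \<noteq> 0"
  proof
    assume "\<zeta> = 0"
    with order[of n] assms(2) show False
      by (simp add: power_0_left)
  qed
  have "a = b" if "a \<le> b" "b < n" "\<zeta> ^ a = \<zeta> ^ b" for a b
  proof -
    have "\<zeta> ^ a * \<zeta> ^ (b - a) = \<zeta> ^ b"
      using \<open>a \<le> b\<close> by (simp flip: power_add)
    then have "\<zeta> ^ a * \<zeta> ^ (b - a) = \<zeta> ^ a * 1"
      using \<open>\<zeta> ^ a = \<zeta> ^ b\<close> by simp
    then have "n dvd b - a"
      using \<open>\<zeta> \<noteq> 0\<close> order by simp
    with that show ?thesis
      by (metis diff_is_0_eq dvd_imp_le le_antisym diff_le_self less_le_trans not_gr0 not_less)
  qed
  with assms show ?thesis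
    by (metis nat_le_linear)
qed

lemma cnj_unit_modulus: "norm x = 1 \<Longrightarrow> y * x = 1 \<Longrightarrow> cnj x = y"
  by (metis div_by_1 mult.commute nonzero_eq_divide_eq norm_one
      power_one zero_neq_one complex_norm_square of_real_1 mult_zero_left)

lemma card_conjugate_roots:
  fixes \<zeta> :: complex
  assumes order: "\<And>k. \<zeta> ^ k = 1 \<longleftrightarrow> n dvd k" and "norm \<zeta> = 1" "1 < l" "2 * l < n"
  shows "card {\<zeta>, cnj \<zeta>, \<zeta> ^ l, cnj (\<zeta> ^ l)} = 4"
proof -
  have cnj_pow: "cnj (\<zeta> ^ k) = \<zeta> ^ (n - k)" if "k \<le> n" for k
  proof (rule cnj_unit_modulus)
    show "norm (\<zeta> ^ k) = 1"
      using assms(2) by (simp add: norm_power)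
    show "\<zeta> ^ (n - k) * \<zeta> ^ k = 1"
      using that order[of n] by (simp flip: power_add)
  qed
  have "{\<zeta>, cnj \<zeta>, \<zeta> ^ l, cnj (\<zeta> ^ l)} = {\<zeta> ^ 1, \<zeta> ^ (n - 1), \<zeta> ^ l, \<zeta> ^ (n - l)}"
    using cnj_pow[of 1] cnj_pow[of l] assms(4) by simp
  moreover have neq: "\<zeta> ^ a \<noteq> \<zeta> ^ b" if "a < n" "b < n" "a \<noteq> b" for a b
    using pow_eq_pow_below_order[OF order] that by blast
  have "\<zeta> ^ 1 \<noteq> \<zeta> ^ (n - 1)" "\<zeta> ^ 1 \<noteq> \<zeta> ^ l" "\<zeta> ^ 1 \<noteq> \<zeta> ^ (n - l)"
    "\<zeta> ^ (n - 1) \<noteq> \<zeta> ^ l" "\<zeta> ^ (n - 1) \<noteq> \<zeta> ^ (n - l)" "\<zeta> ^ l \<noteq> \<zeta> ^ (n - l)"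
    by (intro neq; use assms(3,4) in linarith)+
  ultimately show ?thesis
    by (simp add: card_insert_if)
qed

lemma cyclotomic_5_root:
  assumes order: "\<And>k. y ^ k = 1 \<longleftrightarrow> 5 dvd k"
  shows "ipoly [:1, 1, 1, 1, 1:] y = 0"
proof -
  have "ipoly [:1, 1, 1, 1, 1:] y * (y - 1) = y ^ 5 - 1"
    by (simp add: algebra_simps eval_nat_numeral)
  moreover have "y ^ 5 = 1" "y - 1 \<noteq> 0"
    using order[of 5] order[of 1] by simp_all
  ultimately show ?thesis
    by simp
qed

lemma cyclotomic_8_root:
  assumes order: "\<And>k. y ^ k = 1 \<longleftrightarrow> 8 dvd k"
  shows "ipoly [:1, 0, 0, 0, 1:] y = 0"
proof -
  have "ipoly [:1, 0, 0, 0, 1:] y * (y ^ 4 - 1) = y ^ 8 - 1"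
    by (simp add: algebra_simps eval_nat_numeral)
  moreover have "y ^ 8 = 1" "y ^ 4 - 1 \<noteq> 0"
    using order[of 8] order[of 4] by simp_all
  ultimately show ?thesis
    by simp
qed

lemma cyclotomic_10_root:
  fixes y :: complex
  assumes order: "\<And>k. y ^ k = 1 \<longleftrightarrow> 10 dvd k"
  shows "ipoly [:1, -1, 1, -1, 1:] y = 0"
proof -
  have "ipoly [:1, -1, 1, -1, 1:] y * ((y ^ 5 - 1) * (y + 1)) = y ^ 10 - 1"
    by (simp add: algebra_simps eval_nat_numeral)
  moreover have "y + 1 \<noteq> 0"
    using order[of 2] by (auto simp: add_eq_0_iff2)
  moreover have "y ^ 10 = 1" "y ^ 5 \<noteq> 1"
    using order[of 10] order[of 5] by simp_all
  ultimately show ?thesis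
    by simp
qed

lemma cyclotomic_12_root:
  fixes y :: complex
  assumes order: "\<And>k. y ^ k = 1 \<longleftrightarrow> 12 dvd k"
  shows "ipoly [:1, 0, -1, 0, 1:] y = 0"
proof -
  have "ipoly [:1, 0, -1, 0, 1:] y * ((y ^ 6 - 1) * (y ^ 2 + 1)) = y ^ 12 - 1"
    by (simp add: algebra_simps eval_nat_numeral)
  moreover have "y ^ 2 + 1 \<noteq> 0"
  proof
    assume "y ^ 2 + 1 = 0"
    then have "(y ^ 2) ^ 2 = 1"
      by (simp add: add_eq_0_iff2)
    with order[of 4] show False
      by (simp flip: power_mult)
  qed
  moreover have "y ^ 12 = 1" "y ^ 6 \<noteq> 1"
    using order[of 12] order[of 6] by simp_all
  ultimately show ?thesis
    by simp
qed

lemma cyclotomic_degree_4: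
  assumes "n \<in> {5, 8, 10, 12}"
  obtains P :: "int poly" where "lead_coeff P = 1" "degree P = 4"
    "\<And>y :: complex. (\<And>k. y ^ k = 1 \<longleftrightarrow> n dvd k) \<Longrightarrow> ipoly P y = 0"
proof -
  consider "n = 5" | "n = 8" | "n = 10" | "n = 12"
    using assms by blast
  then show ?thesis
  proof cases
    case 1
    with cyclotomic_5_root show ?thesis
      by (intro that[of "[:1, 1, 1, 1, 1:]"]) simp_all
  next
    case 2
    with cyclotomic_8_root show ?thesis
      by (intro that[of "[:1, 0, 0, 0, 1:]"]) simp_all
  next
    case 3
    with cyclotomic_10_root show ?thesis
      by (intro that[of "[:1, -1, 1, -1, 1:]"]) simp_all
  next
    case 4
    with cyclotomic_12_root show ?thesis
      by (intro that[of "[:1, 0, -1, 0, 1:]"]) simp_all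
  qed
qed

section \<open>The single-conjugate setting\<close>

lemma single_conj_a_imp_conjugate_embedding:
  assumes "single_conj_a \<beta> R \<phi>"
  shows "conjugate_embedding R \<phi> \<and> \<beta> \<in> R \<and> norm (\<phi> \<beta>) < 1"
proof -
  obtain p b' where R: "R = Zring \<beta>" and p: "int_minpoly p \<beta>"
    and roots: "{w. ipoly p w = 0} = {\<beta>, cnj \<beta>, b', cnj b'}"
    and \<phi>: "\<forall>q. \<phi> (ipoly q \<beta>) = ipoly q b'" and "norm b' < 1"
    using assms unfolding single_conj_a_def by blast
  have "lead_coeff p = 1" "irreducible p" "ipoly p \<beta> = 0"
    using p unfolding int_minpoly_def by blast+
  have "\<phi> \<beta> = b'"
    using \<phi>[rule_format, of "[:0, 1:]"] by simp
  moreover have "conjugate_embedding R \<phi>"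
    unfolding conjugate_embedding_def
  proof (intro exI conjI)
    show "R = Zring \<beta>" "\<forall>q. \<phi> (ipoly q \<beta>) = ipoly q b'" "lead_coeff p = 1" "ipoly p \<beta> = 0"
      by fact+
    show "ipoly p b' = 0"
      using roots by blast
    show "degree p \<le> card {\<beta>, cnj \<beta>, b', cnj b'}"
      using degree_irreducible_int_poly_eq_card_roots[OF \<open>irreducible p\<close> \<open>ipoly p \<beta> = 0\<close>] roots
      by simp
  qed
  ultimately show ?thesis
    using R \<open>norm b' < 1\<close> mem_Zring_generator by simp
qed

lemma single_conj_b_imp_conjugate_embedding:
  assumes "single_conj_b \<beta> R \<phi>"
  shows "conjugate_embedding R \<phi> \<and> \<beta> \<in> R \<and> norm (\<phi> \<beta>) < 1"
proof -
  obtain n l :: nat where "n \<ge> 1"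
    and R: "R = Zring (exp (2 * pi * \<i> / of_nat n))" and "\<beta> \<in> R"
    and l: "{k. 1 < k \<and> 2 * k < n \<and> coprime k n} = {l}"
    and \<phi>: "\<forall>q. \<phi> (ipoly q (exp (2 * pi * \<i> / of_nat n))) = ipoly q (exp (2 * pi * \<i> / of_nat n) ^ l)"
    and "norm (\<phi> \<beta>) < 1"
    using assms unfolding single_conj_b_def Let_def by blast
  define \<zeta> where "\<zeta> = exp (2 * pi * \<i> / of_nat n)"
  have order: "\<And>k. \<zeta> ^ k = 1 \<longleftrightarrow> n dvd k"
    unfolding \<zeta>_def using \<open>n \<ge> 1\<close> by (rule root_unity_pow_eq_1_iff)
  have "1 < l" "2 * l < n" "coprime l n"
    using l by blast+
  then have order_l: "\<And>k. (\<zeta> ^ l) ^ k = 1 \<longleftrightarrow> n dvd k"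
    using order by (intro pow_coprime_eq_1_iff)
  obtain P where "lead_coeff P = 1" "degree P = 4" "ipoly P \<zeta> = 0" "ipoly P (\<zeta> ^ l) = 0"
    using cyclotomic_degree_4[OF unique_coprime_below_half_cases[OF l]] order order_l by metis
  moreover have "card {\<zeta>, cnj \<zeta>, \<zeta> ^ l, cnj (\<zeta> ^ l)} = 4"
    using order \<open>1 < l\<close> \<open>2 * l < n\<close> by (intro card_conjugate_roots) (auto simp: \<zeta>_def norm_exp_eq_Re)
  ultimately show ?thesis
    unfolding conjugate_embedding_def using R \<phi> \<open>\<beta> \<in> R\<close> \<open>norm (\<phi> \<beta>) < 1\<close>
    by (intro conjI exI[of _ \<zeta>] exI[of _ "\<zeta> ^ l"] exI[of _ P]) (simp_all add: \<zeta>_def)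
qed

lemma conjugate_ifs_if_single_conjugate_setting:
  assumes setting: "single_conjugate_setting \<beta> R \<phi>"
    and z: "\<forall>k<m. z k \<in> R"
    and A: "compact A" "A \<noteq> {}" "A = (\<Union>k<m. (\<lambda>x. \<phi> \<beta> * x + \<phi> (z k)) ` A)"
  shows "conjugate_ifs \<beta> \<phi> z m A R"
proof -
  have "1 < norm \<beta>"
    using setting unfolding single_conjugate_setting_def pisot_unit_def by blast
  moreover have emb: "conjugate_embedding R \<phi>" and "\<beta> \<in> R" and "norm (\<phi> \<beta>) < 1"
    using setting single_conj_a_imp_conjugate_embedding single_conj_b_imp_conjugate_embedding
    unfolding single_conjugate_setting_def by blast+
  show ?thesis
  proof unfold_locales
    show "1 < norm \<beta>" "norm (\<phi> \<beta>) < 1"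
      by fact+
    show "compact A" "A \<noteq> {}" "A = (\<Union>k<m. (\<lambda>x. \<phi> \<beta> * x + \<phi> (z k)) ` A)"
      by (fact A)+
  next
    fix x k assume "x \<in> R" "k < m"
    then show "\<phi> (\<beta> * x + z k) = \<phi> \<beta> * \<phi> x + \<phi> (z k)"
      using conjugate_embedding_affine[OF emb \<open>\<beta> \<in> R\<close>] z by blast
  next
    fix r s
    show "finite {x \<in> R. norm x \<le> r \<and> norm (\<phi> x) \<le> s}"
      using emb by (rule conjugate_embedding_finite_bounded)
  qed
qed

theorem proposition2:
  fixes \<beta> :: complex and R :: "complex set" and \<phi> :: "complex \<Rightarrow> complex"
    and m :: nat and z :: "nat \<Rightarrow> complex" and A :: "complex set"
  assumes setting: "single_conjugate_setting \<beta> R \<phi>"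
    and z_in_R: "\<forall>k<m. z k \<in> R"
    and A_attr: "compact A" "A \<noteq> {}"
      "A = (\<Union>k<m. (\<lambda>x. \<phi> \<beta> * x + \<phi> (z k)) ` A)"
  shows
    "(\<forall>xs. set xs \<subseteq> R \<and> is_cycle (\<lambda>k x. \<beta> * x + z k) m xs \<longrightarrow>
        is_cycle (\<lambda>k x. \<phi> \<beta> * x + \<phi> (z k)) m (map \<phi> xs) \<and> \<phi> ` set xs \<subseteq> A)
     \<and> (\<forall>\<Lambda>. \<Lambda> \<subseteq> R \<and> \<Lambda> \<noteq> {} \<and> closed \<Lambda> \<and> discrete_set \<Lambda> \<and>
          \<Lambda> = (\<Union>k<m. (\<lambda>x. \<beta> * x + z k) ` \<Lambda>) \<longrightarrow>
          \<phi> ` \<Lambda> \<subseteq> A \<and> A \<subseteq> closure (\<phi> ` \<Lambda>))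
     \<and> (let S = {\<Lambda>. \<Lambda> \<subseteq> R \<and> closed \<Lambda> \<and> discrete_set \<Lambda> \<and>
                     \<Lambda> = (\<Union>k<m. (\<lambda>x. \<beta> * x + z k) ` \<Lambda>)}
        in finite S \<and> \<Union>S \<in> S \<and> (\<forall>\<Lambda>\<in>S. \<Lambda> \<subseteq> \<Union>S))"
proof -
  interpret conjugate_ifs \<beta> \<phi> z m A R
    using setting z_in_R A_attr by (rule conjugate_ifs_if_single_conjugate_setting)
  have "\<phi> ` \<Lambda> \<subseteq> A \<and> A \<subseteq> closure (\<phi> ` \<Lambda>)"
    if "\<Lambda> \<subseteq> R" "\<Lambda> \<noteq> {}" "discrete_set \<Lambda>" and \<Lambda>: "\<Lambda> = (\<Union>k<m. (\<lambda>x. \<beta> * x + z k) ` \<Lambda>)" for \<Lambda>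
  proof
    show "\<phi> ` \<Lambda> \<subseteq> A"
      using that(1,3) equalityD1[OF \<Lambda>] by (rule solution_image_subset)
    show "A \<subseteq> closure (\<phi> ` \<Lambda>)"
      using that(1,2) by (rule attractor_subset_closure_solution_image) (use equalityD2[OF \<Lambda>] in blast)
  qed
  then show ?thesis
    using cycle_image solutions_finite_with_maximum unfolding Let_def by (intro conjI allI impI) auto
qed

end
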